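(* Let $\phi, \phi' \in L^1(\mathbb{R}_+)$ with $\int_0^\infty\phi = \int_0^\infty\phi' = 1$, and let $I_{\phi}$ and $I_{\phi'}$ be the closed ideals in $L^1(\mathbb{R})$ generated by $\tilde{\phi}$ and $\tilde{\phi'}$ respectively. If $I_{\phi} \subseteq I_{\phi'}$, then $S_{\phi}$ is stronger than $S_{\phi'}$.
   Context: $\mathbb{R}_+ = [0,\infty)$; functions are complex-valued. $S_{\phi}(f) = \lim_{x\to\infty}\int_0^x f(t)\phi(x-t)\,dt$ for $f\in L^\infty(\mathbb{R}_+)$, with domain $\mathcal{D}(S_\phi)$ the set of $f$ for which the limit exists. $S$ is stronger than $S'$ if $\mathcal{D}(S')\subseteq\mathcal{D}(S)$ and $S = S'$ on $\mathcal{D}(S')$. $\tilde{\phi}\in L^1(\mathbb{R})$ equals $\phi$ on $[0,\infty)$ and $0$ on $(-\infty,0)$; $L^1(\mathbb{R})$ is the convolution Banach algebra. *)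

theory Defs
  imports "HOL-Analysis.Analysis"
begin

definition ext0 :: "(real \<Rightarrow> complex) \<Rightarrow> real \<Rightarrow> complex" where
  "ext0 \<phi> x = (if 0 \<le> x then \<phi> x else 0)"

definition conv :: "(real \<Rightarrow> complex) \<Rightarrow> (real \<Rightarrow> complex) \<Rightarrow> real \<Rightarrow> complex" where
  "conv f g x = (\<integral>y. f (x - y) * g y \<partial>lborel)"

definition L1_dist :: "(real \<Rightarrow> complex) \<Rightarrow> (real \<Rightarrow> complex) \<Rightarrow> real" where
  "L1_dist f g = (\<integral>x. norm (f x - g x) \<partial>lborel)"

text \<open>A closed ideal of the convolution algebra L1(R), represented as a set of integrable
  functions (closedness in the L1 norm makes it automatically closed under a.e. equality).\<close>
definition is_closed_ideal :: "(real \<Rightarrow> complex) set \<Rightarrow> bool" where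
  "is_closed_ideal I \<longleftrightarrow>
     (\<forall>f\<in>I. integrable lborel f) \<and>
     (\<forall>f\<in>I. \<forall>g\<in>I. (\<lambda>x. f x + g x) \<in> I) \<and>
     (\<forall>f\<in>I. \<forall>c. (\<lambda>x. c * f x) \<in> I) \<and>
     (\<forall>f\<in>I. \<forall>h. integrable lborel h \<longrightarrow> conv f h \<in> I) \<and>
     (\<forall>F f. (\<forall>n::nat. F n \<in> I) \<and> integrable lborel f \<and>
            (\<lambda>n. L1_dist (F n) f) \<longlonglongrightarrow> 0 \<longrightarrow> f \<in> I)"

definition closed_ideal_gen :: "(real \<Rightarrow> complex) \<Rightarrow> (real \<Rightarrow> complex) set" where
  "closed_ideal_gen g = \<Inter>{I. is_closed_ideal I \<and> g \<in> I}"

definition Linf_pos :: "(real \<Rightarrow> complex) set" where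
  "Linf_pos = {f. f \<in> borel_measurable lborel \<and>
                  (\<exists>B. AE x in lborel. 0 \<le> x \<longrightarrow> norm (f x) \<le> B)}"

text \<open>S_phi(f) = L, i.e. f is in the domain of S_phi and its value is L.\<close>
definition summ :: "(real \<Rightarrow> complex) \<Rightarrow> (real \<Rightarrow> complex) \<Rightarrow> complex \<Rightarrow> bool" where
  "summ \<phi> f L \<longleftrightarrow>
     ((\<lambda>x. LINT t:{0..x}|lborel. f t * \<phi> (x - t)) \<longlongrightarrow> L) at_top"

definition stronger :: "(real \<Rightarrow> complex) \<Rightarrow> (real \<Rightarrow> complex) \<Rightarrow> bool" where
  "stronger \<phi> \<phi>' \<longleftrightarrow> (\<forall>f\<in>Linf_pos. \<forall>L. summ \<phi>' f L \<longrightarrow> summ \<phi> f L)"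

end

theory Submission
  imports Defs
begin

text \<open>Let \<open>f \<in> L\<^sup>\<infinity>(\<real>\<^sub>+)\<close> with \<open>S\<^sub>\<phi>\<^sub>'(f) = L\<close>, and let \<open>g\<close> be \<open>f\<close> extended by zero to \<open>\<real>\<close>,
  so that the \<open>\<psi>\<close>-means of \<open>f\<close> are the convolutions \<open>(ext0 \<psi> * g)(x)\<close>. The set of all
  \<open>k \<in> L\<^sup>1(\<real>)\<close> with \<open>(k * g)(x) \<rightarrow> L \<integral>k\<close> as \<open>x \<rightarrow> \<infinity>\<close> is a closed ideal: it is linear, closed in
  \<open>L\<^sup>1\<close> because \<open>k \<mapsto> k * g\<close> is bounded from \<open>L\<^sup>1\<close> into the bounded functions, and stable under
  convolution by \<open>h\<close> since \<open>(k * h) * g = (k * g) * h\<close> and convolving a bounded function with a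
  limit at \<open>\<infinity>\<close> against \<open>h\<close> multiplies the limit by \<open>\<integral>h\<close> (dominated convergence). It contains
  \<open>ext0 \<phi>'\<close>, hence \<open>I\<^sub>\<phi>\<^sub>'\<close>, hence \<open>ext0 \<phi>\<close>, which says \<open>S\<^sub>\<phi>(f) = L\<close>.\<close>

lemma lborel_integrable_reflect:
  fixes k :: "real \<Rightarrow> 'a::{banach, second_countable_topology}"
  assumes "integrable lborel k"
  shows "integrable lborel (\<lambda>t. k (x - t))"
  using lborel_integrable_real_affine[OF assms, of "-1" x] by simp

lemma lborel_integral_reflect:
  fixes k :: "real \<Rightarrow> 'a::{banach, second_countable_topology}"
  shows "(\<integral>t. k (x - t) \<partial>lborel) = (\<integral>t. k t \<partial>lborel)"
  using lborel_integral_real_affine[of "-1" k x] by simp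

lemma lborel_integrable_shift:
  fixes k :: "real \<Rightarrow> 'a::{banach, second_countable_topology}"
  assumes "integrable lborel k"
  shows "integrable lborel (\<lambda>t. k (t - y))"
  using lborel_integrable_real_affine[OF assms, of 1 "-y"] by simp

lemma lborel_integral_shift:
  fixes k :: "real \<Rightarrow> 'a::{banach, second_countable_topology}"
  shows "(\<integral>t. k (t - y) \<partial>lborel) = (\<integral>t. k t \<partial>lborel)"
  using lborel_integral_real_affine[of 1 k "-y"] by simp

lemma integrable_mult_bounded:
  fixes g k :: "real \<Rightarrow> complex"
  assumes "g \<in> borel_measurable lborel" and "\<And>t. norm (g t) \<le> B" and "integrable lborel k"
  shows "integrable lborel (\<lambda>t. k t * g t)"
proof (rule Bochner_Integration.integrable_bound[where f="\<lambda>t. of_real B * k t"])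
  show "integrable lborel (\<lambda>t. complex_of_real B * k t)"
    using assms(3) by simp
  show "(\<lambda>t. k t * g t) \<in> borel_measurable lborel"
    using assms(1,3) by measurable
  have "norm (k t * g t) \<le> norm (complex_of_real B * k t)" for t
  proof -
    have "norm (k t * g t) \<le> norm (k t) * B"
      unfolding norm_mult by (rule mult_left_mono[OF assms(2)]) simp
    also have "\<dots> \<le> norm (complex_of_real B * k t)"
      by (simp add: norm_mult mult.commute mult_right_mono)
    finally show ?thesis .
  qed
  then show "AE t in lborel. norm (k t * g t) \<le> norm (complex_of_real B * k t)"
    by simp
qed

lemma borel_measurable_conv [measurable]:
  assumes [measurable]: "k \<in> borel_measurable borel" "h \<in> borel_measurable borel"
  shows "conv k h \<in> borel_measurable borel"
  unfolding conv_def
  by (rule lborel.borel_measurable_lebesgue_integral[where f="\<lambda>x y. k (x - y) * h y", simplified])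
    measurable

lemma integrable_conv_kernel:
  fixes k h :: "real \<Rightarrow> complex"
  assumes k: "integrable lborel k" and h: "integrable lborel h"
  shows "integrable (lborel \<Otimes>\<^sub>M lborel) (\<lambda>(y, x). k (x - y) * h y)"
proof (rule lborel_pair.Fubini_integrable)
  have [measurable]: "k \<in> borel_measurable borel" "h \<in> borel_measurable borel"
    using k h by auto
  show "(\<lambda>(y, x). k (x - y) * h y) \<in> borel_measurable (lborel \<Otimes>\<^sub>M lborel)"
    by measurable
  have "(\<integral>x. norm (k (x - y) * h y) \<partial>lborel) = (\<integral>x. norm (k x) \<partial>lborel) * norm (h y)" for y
    using lborel_integral_shift[of "\<lambda>x. norm (k x)" y] by (simp add: norm_mult)
  then show "integrable lborel (\<lambda>y. \<integral>x. norm ((\<lambda>(y, x). k (x - y) * h y) (y, x)) \<partial>lborel)"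
    using h by simp
  show "AE y in lborel. integrable lborel (\<lambda>x. (\<lambda>(y, x). k (x - y) * h y) (y, x))"
    using lborel_integrable_shift[OF k] by simp
qed

lemma
  fixes k h :: "real \<Rightarrow> complex"
  assumes k: "integrable lborel k" and h: "integrable lborel h"
  shows integrable_conv: "integrable lborel (conv k h)"
    and integral_conv: "(\<integral>x. conv k h x \<partial>lborel) = (\<integral>x. k x \<partial>lborel) * (\<integral>x. h x \<partial>lborel)"
proof -
  have K: "integrable (lborel \<Otimes>\<^sub>M lborel) (\<lambda>(y, x). k (x - y) * h y)"
    using integrable_conv_kernel[OF k h] .
  have K': "integrable (lborel \<Otimes>\<^sub>M lborel) (\<lambda>(x, y). k (x - y) * h y)"
    using lborel_pair.integrable_product_swap[OF K] by (simp add: case_prod_beta)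
  have conv_eq: "conv k h = (\<lambda>x. \<integral>y. (\<lambda>(x, y). k (x - y) * h y) (x, y) \<partial>lborel)"
    by (simp add: conv_def fun_eq_iff)
  show "integrable lborel (conv k h)"
    unfolding conv_eq by (rule lborel_pair.integrable_fst'[OF K'])
  have "(\<integral>x. conv k h x \<partial>lborel) = integral\<^sup>L (lborel \<Otimes>\<^sub>M lborel) (\<lambda>(x, y). k (x - y) * h y)"
    unfolding conv_eq by (rule lborel_pair.integral_fst'[OF K'])
  also have "\<dots> = integral\<^sup>L (lborel \<Otimes>\<^sub>M lborel) (\<lambda>(y, x). k (x - y) * h y)"
    using lborel_pair.integral_product_swap[OF borel_measurable_integrable[OF K]]
    by (simp add: case_prod_beta)
  also have "\<dots> = (\<integral>y. (\<integral>x. k (x - y) * h y \<partial>lborel) \<partial>lborel)"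
    using lborel_pair.integral_fst'[OF K] by simp
  also have "\<dots> = (\<integral>y. (\<integral>x. k x \<partial>lborel) * h y \<partial>lborel)"
    using lborel_integral_shift[of k] by simp
  finally show "(\<integral>x. conv k h x \<partial>lborel) = (\<integral>x. k x \<partial>lborel) * (\<integral>x. h x \<partial>lborel)"
    by simp
qed

lemma tendsto_conv_at_top:
  fixes u h :: "real \<Rightarrow> complex"
  assumes [measurable]: "u \<in> borel_measurable borel" and u_bound: "\<And>x. norm (u x) \<le> C"
    and lim: "(u \<longlongrightarrow> c) at_top" and h: "integrable lborel h"
  shows "(conv u h \<longlongrightarrow> c * (\<integral>y. h y \<partial>lborel)) at_top"
proof (rule tendsto_at_topI_sequentially)
  have [measurable]: "h \<in> borel_measurable borel"
    using h by auto
  fix X :: "nat \<Rightarrow> real" assume X: "filterlim X at_top sequentially"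
  have "(\<lambda>n. \<integral>y. u (X n - y) * h y \<partial>lborel) \<longlonglongrightarrow> (\<integral>y. c * h y \<partial>lborel)"
  proof (rule integral_dominated_convergence[where w="\<lambda>y. C * norm (h y)"])
    show "integrable lborel (\<lambda>y. C * norm (h y))"
      using h by simp
    have "(\<lambda>n. u (X n - y)) \<longlonglongrightarrow> c" for y
      using filterlim_compose[OF lim filterlim_tendsto_add_at_top[OF tendsto_const X, of "-y"]]
      by simp
    then show "AE y in lborel. (\<lambda>n. u (X n - y) * h y) \<longlonglongrightarrow> c * h y"
      by (intro AE_I2 tendsto_mult tendsto_const)
    show "AE y in lborel. norm (u (X n - y) * h y) \<le> C * norm (h y)" for n
      by (simp add: norm_mult mult_right_mono u_bound)
  qed simp_all
  then show "(\<lambda>n. conv u h (X n)) \<longlonglongrightarrow> c * (\<integral>y. h y \<partial>lborel)"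
    by (simp add: conv_def)
qed

definition conv_limit_set :: "(real \<Rightarrow> complex) \<Rightarrow> complex \<Rightarrow> (real \<Rightarrow> complex) set" where
  "conv_limit_set g L =
     {k. integrable lborel k \<and> (conv k g \<longlongrightarrow> L * (\<integral>x. k x \<partial>lborel)) at_top}"

context
  fixes g :: "real \<Rightarrow> complex" and B :: real
  assumes g_measurable [measurable]: "g \<in> borel_measurable borel"
    and g_bound: "\<And>t. norm (g t) \<le> B"
begin

lemma bound_nonneg: "0 \<le> B"
  using g_bound[of 0] norm_ge_zero order_trans by blast

lemma integrable_conv_integrand:
  assumes "integrable lborel k"
  shows "integrable lborel (\<lambda>y. k (x - y) * g y)"
  using integrable_mult_bounded[OF _ g_bound lborel_integrable_reflect[OF assms]] by simp

lemma integral_norm_conv_integrand_le: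
  assumes k: "integrable lborel k"
  shows "(\<integral>y. norm (k (x - y) * g y) \<partial>lborel) \<le> B * (\<integral>t. norm (k t) \<partial>lborel)"
proof -
  have "(\<integral>y. norm (k (x - y) * g y) \<partial>lborel) \<le> (\<integral>y. B * norm (k (x - y)) \<partial>lborel)"
  proof (rule integral_mono)
    show "integrable lborel (\<lambda>y. norm (k (x - y) * g y))"
      using integrable_conv_integrand[OF k] by simp
    show "integrable lborel (\<lambda>y. B * norm (k (x - y)))"
      using lborel_integrable_reflect[OF k] by simp
    show "norm (k (x - y) * g y) \<le> B * norm (k (x - y))" for y
      unfolding norm_mult by (subst mult.commute) (rule mult_right_mono[OF g_bound], simp)
  qed
  also have "\<dots> = B * (\<integral>t. norm (k t) \<partial>lborel)"
    using lborel_integral_reflect[of "\<lambda>t. norm (k t)" x] by simp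
  finally show ?thesis .
qed

lemma norm_conv_le:
  assumes "integrable lborel k"
  shows "norm (conv k g x) \<le> B * (\<integral>t. norm (k t) \<partial>lborel)"
  unfolding conv_def
  using integral_norm_bound integral_norm_conv_integrand_le[OF assms] by (rule order_trans)

lemma conv_add_left:
  assumes "integrable lborel k1" "integrable lborel k2"
  shows "conv (\<lambda>t. k1 t + k2 t) g x = conv k1 g x + conv k2 g x"
  unfolding conv_def distrib_right
  using assms by (intro Bochner_Integration.integral_add integrable_conv_integrand)

lemma conv_diff_left:
  assumes "integrable lborel k1" "integrable lborel k2"
  shows "conv (\<lambda>t. k1 t - k2 t) g x = conv k1 g x - conv k2 g x"
  unfolding conv_def left_diff_distrib
  using assms by (intro Bochner_Integration.integral_diff integrable_conv_integrand)

lemma conv_mult_left: "conv (\<lambda>t. c * k t) g x = c * conv k g x"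
  unfolding conv_def by (simp add: mult.assoc)

lemma conv_conv_commute:
  assumes k: "integrable lborel k" and h: "integrable lborel h"
  shows "conv (conv k h) g = conv (conv k g) h"
proof
  fix x
  have [measurable]: "k \<in> borel_measurable borel" "h \<in> borel_measurable borel"
    using k h by auto
  let ?Q = "\<lambda>(y, t). k (x - y - t) * g t * h y"
  have Qm: "?Q \<in> borel_measurable (lborel \<Otimes>\<^sub>M lborel)"
    by measurable
  have Q: "integrable (lborel \<Otimes>\<^sub>M lborel) ?Q"
  proof (rule lborel_pair.Fubini_integrable[OF Qm])
    let ?C = "B * (\<integral>t. norm (k t) \<partial>lborel)"
    show "integrable lborel (\<lambda>y. \<integral>t. norm (?Q (y, t)) \<partial>lborel)"
    proof (rule Bochner_Integration.integrable_bound[where f="\<lambda>y. ?C * norm (h y)"])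
      show "integrable lborel (\<lambda>y. ?C * norm (h y))"
        using h by simp
      show "(\<lambda>y. \<integral>t. norm (?Q (y, t)) \<partial>lborel) \<in> borel_measurable lborel"
        by (rule lborel.borel_measurable_lebesgue_integral[where f="\<lambda>y t. norm (?Q (y, t))"])
          measurable
      have "(\<integral>t. norm (?Q (y, t)) \<partial>lborel) \<le> ?C * norm (h y)" for y
      proof -
        have "(\<integral>t. norm (?Q (y, t)) \<partial>lborel)
            = (\<integral>t. norm (k (x - y - t) * g t) \<partial>lborel) * norm (h y)"
          by (simp add: norm_mult)
        also have "\<dots> \<le> ?C * norm (h y)"
          using integral_norm_conv_integrand_le[OF k, of "x - y"] by (simp add: mult_right_mono)
        finally show ?thesis .
      qed
      then show "AE y in lborel. norm (\<integral>t. norm (?Q (y, t)) \<partial>lborel) \<le> norm (?C * norm (h y))"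
        using bound_nonneg by (simp add: abs_mult)
    qed
    show "AE y in lborel. integrable lborel (\<lambda>t. ?Q (y, t))"
      using integrable_conv_integrand[OF k] by simp
  qed
  have "conv (conv k h) g x = (\<integral>t. (\<integral>y. ?Q (y, t) \<partial>lborel) \<partial>lborel)"
    by (simp add: conv_def algebra_simps)
  also have "\<dots> = (\<integral>y. (\<integral>t. ?Q (y, t) \<partial>lborel) \<partial>lborel)"
    using lborel_pair.Fubini_integral[OF Q] by simp
  also have "\<dots> = conv (conv k g) h x"
    by (simp add: conv_def)
  finally show "conv (conv k h) g x = conv (conv k g) h x" .
qed

lemma dist_conv_limit_le:
  assumes f: "integrable lborel f" and k: "integrable lborel k"
  shows "dist (conv f g x) (L * (\<integral>t. f t \<partial>lborel))
    \<le> dist (conv k g x) (L * (\<integral>t. k t \<partial>lborel)) + (B + norm L) * L1_dist k f"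
proof -
  have "norm (conv f g x - conv k g x) = norm (conv (\<lambda>t. k t - f t) g x)"
    using conv_diff_left[OF k f] by (simp add: norm_minus_commute)
  also have "\<dots> \<le> B * L1_dist k f"
    unfolding L1_dist_def using f k by (intro norm_conv_le) simp
  finally have conv_close: "norm (conv f g x - conv k g x) \<le> B * L1_dist k f" .
  have "norm ((\<integral>t. k t \<partial>lborel) - (\<integral>t. f t \<partial>lborel)) \<le> L1_dist k f"
    unfolding L1_dist_def using f k integral_norm_bound[of lborel "\<lambda>t. k t - f t"] by simp
  then have integral_close:
    "dist (L * (\<integral>t. k t \<partial>lborel)) (L * (\<integral>t. f t \<partial>lborel)) \<le> norm L * L1_dist k f"
    unfolding dist_norm right_diff_distrib[symmetric] norm_mult by (simp add: mult_left_mono)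
  have "dist (conv f g x) (L * (\<integral>t. f t \<partial>lborel))
      \<le> dist (conv f g x) (conv k g x) + dist (conv k g x) (L * (\<integral>t. k t \<partial>lborel))
        + dist (L * (\<integral>t. k t \<partial>lborel)) (L * (\<integral>t. f t \<partial>lborel))"
    using dist_triangle[of "conv f g x" "L * (\<integral>t. f t \<partial>lborel)" "conv k g x"]
      dist_triangle[of "conv k g x" "L * (\<integral>t. f t \<partial>lborel)" "L * (\<integral>t. k t \<partial>lborel)"]
    by linarith
  with conv_close integral_close show ?thesis
    unfolding dist_norm distrib_right by linarith
qed

lemma conv_mem_conv_limit_set:
  assumes f: "f \<in> conv_limit_set g L" and h: "integrable lborel h"
  shows "conv f h \<in> conv_limit_set g L"
proof -
  have fi: "integrable lborel f" and lim: "(conv f g \<longlongrightarrow> L * (\<integral>x. f x \<partial>lborel)) at_top"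
    using f by (auto simp: conv_limit_set_def)
  have "(conv (conv f g) h \<longlongrightarrow> L * (\<integral>x. f x \<partial>lborel) * (\<integral>x. h x \<partial>lborel)) at_top"
    using fi h lim norm_conv_le[OF fi] by (intro tendsto_conv_at_top) auto
  then show ?thesis
    using fi h by (simp add: conv_limit_set_def conv_conv_commute integrable_conv integral_conv
        mult.assoc)
qed

lemma conv_limit_set_L1_closed:
  assumes F: "\<And>n. F n \<in> conv_limit_set g L" and f: "integrable lborel f"
    and F_f: "(\<lambda>n. L1_dist (F n) f) \<longlonglongrightarrow> 0"
  shows "f \<in> conv_limit_set g L"
proof -
  have Fi: "\<And>n. integrable lborel (F n)"
    and F_lim: "\<And>n. (conv (F n) g \<longlongrightarrow> L * (\<integral>x. F n x \<partial>lborel)) at_top"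
    using F by (auto simp: conv_limit_set_def)
  have "(conv f g \<longlongrightarrow> L * (\<integral>x. f x \<partial>lborel)) at_top"
  proof (rule tendstoI)
    fix e :: real assume "0 < e"
    have "(\<lambda>n. (B + norm L) * L1_dist (F n) f) \<longlonglongrightarrow> 0"
      using tendsto_mult_right_zero[OF F_f] .
    then have "eventually (\<lambda>n. (B + norm L) * L1_dist (F n) f < e / 2) sequentially"
      using order_tendstoD(2)[OF _ half_gt_zero[OF \<open>0 < e\<close>]] by simp
    then obtain n where n: "(B + norm L) * L1_dist (F n) f < e / 2"
      using eventually_sequentially by auto
    have "eventually (\<lambda>x. dist (conv (F n) g x) (L * (\<integral>x. F n x \<partial>lborel)) < e / 2) at_top"
      using \<open>0 < e\<close> by (intro tendstoD[OF F_lim]) simp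
    then show "eventually (\<lambda>x. dist (conv f g x) (L * (\<integral>x. f x \<partial>lborel)) < e) at_top"
    proof eventually_elim
      case (elim x)
      with dist_conv_limit_le[OF f Fi[of n], of x L] n show ?case
        by linarith
    qed
  qed
  with f show ?thesis
    by (simp add: conv_limit_set_def)
qed

lemma is_closed_ideal_conv_limit_set: "is_closed_ideal (conv_limit_set g L)"
  unfolding is_closed_ideal_def
proof (intro conjI ballI allI impI)
  fix f assume "f \<in> conv_limit_set g L"
  then show "integrable lborel f"
    by (simp add: conv_limit_set_def)
next
  fix f k assume "f \<in> conv_limit_set g L" "k \<in> conv_limit_set g L"
  moreover from this have "conv (\<lambda>x. f x + k x) g = (\<lambda>x. conv f g x + conv k g x)"
    by (auto simp: conv_limit_set_def conv_add_left)
  ultimately show "(\<lambda>x. f x + k x) \<in> conv_limit_set g L"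
    by (auto simp: conv_limit_set_def distrib_left intro: tendsto_add)
next
  fix f and c :: complex assume "f \<in> conv_limit_set g L"
  then show "(\<lambda>x. c * f x) \<in> conv_limit_set g L"
    using tendsto_mult_left[of "conv f g" "L * (\<integral>x. f x \<partial>lborel)" at_top c]
    by (auto simp: conv_limit_set_def conv_mult_left[abs_def] mult.left_commute)
qed (auto intro: conv_mem_conv_limit_set conv_limit_set_L1_closed)

end

lemma ext0_eq_indicator: "ext0 \<psi> = (\<lambda>x. indicator {0..} x *\<^sub>R \<psi> x)"
  by (auto simp: ext0_def fun_eq_iff)

lemma integrable_ext0: "set_integrable lborel {0..} \<psi> \<Longrightarrow> integrable lborel (ext0 \<psi>)"
  unfolding set_integrable_def ext0_eq_indicator .

lemma integral_ext0: "(\<integral>x. ext0 \<psi> x \<partial>lborel) = (LINT t:{0..}|lborel. \<psi> t)"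
  unfolding set_lebesgue_integral_def ext0_eq_indicator ..

lemma summ_iff_tendsto_conv:
  assumes [measurable]: "f \<in> borel_measurable borel" "g \<in> borel_measurable borel"
    "ext0 \<psi> \<in> borel_measurable borel"
    and g_eq: "AE t in lborel. g t = (if 0 \<le> t then f t else 0)"
  shows "summ \<psi> f L \<longleftrightarrow> (conv (ext0 \<psi>) g \<longlongrightarrow> L) at_top"
proof -
  have "(LINT t:{0..x}|lborel. f t * \<psi> (x - t))
      = (\<integral>t. indicator {0..} t *\<^sub>R (f t * ext0 \<psi> (x - t)) \<partial>lborel)" for x
    unfolding set_lebesgue_integral_def
    by (rule Bochner_Integration.integral_cong) (auto simp: ext0_def indicator_def)
  also have "\<dots> x = conv (ext0 \<psi>) g x" for x
    unfolding conv_def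
  proof (rule integral_cong_AE)
    show "AE t in lborel. indicator {0..} t *\<^sub>R (f t * ext0 \<psi> (x - t)) = ext0 \<psi> (x - t) * g t"
      using g_eq by eventually_elim (simp add: indicator_def)
  qed measurable
  finally show ?thesis
    unfolding summ_def by simp
qed

lemma Linf_pos_bounded_extension:
  assumes "f \<in> Linf_pos"
  obtains g :: "real \<Rightarrow> complex" and B where "g \<in> borel_measurable borel" "\<And>t. norm (g t) \<le> B"
    "AE t in lborel. g t = (if 0 \<le> t then f t else 0)"
proof -
  from assms obtain B where f_meas [measurable]: "f \<in> borel_measurable borel"
    and f_bound: "AE t in lborel. 0 \<le> t \<longrightarrow> norm (f t) \<le> B"
    by (auto simp: Linf_pos_def)
  define g where "g t = (if 0 \<le> t \<and> norm (f t) \<le> B then f t else 0)" for t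
  show thesis
  proof (rule that[of g "max B 0"])
    show "g \<in> borel_measurable borel"
      unfolding g_def by measurable
    show "norm (g t) \<le> max B 0" for t
      by (auto simp: g_def)
    show "AE t in lborel. g t = (if 0 \<le> t then f t else 0)"
      using f_bound by eventually_elim (simp add: g_def)
  qed
qed

theorem theorem3p3:
  fixes \<phi> \<phi>' :: "real \<Rightarrow> complex"
  assumes "set_integrable lborel {0..} \<phi>"
    and "set_integrable lborel {0..} \<phi>'"
    and "(LINT t:{0..}|lborel. \<phi> t) = 1"
    and "(LINT t:{0..}|lborel. \<phi>' t) = 1"
    and "closed_ideal_gen (ext0 \<phi>) \<subseteq> closed_ideal_gen (ext0 \<phi>')"
  shows "stronger \<phi> \<phi>'"
  unfolding stronger_def
proof (intro ballI allI impI)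
  fix f L assume "f \<in> Linf_pos" and summ': "summ \<phi>' f L"
  obtain g B where g: "g \<in> borel_measurable borel" "\<And>t. norm (g t) \<le> B"
    "AE t in lborel. g t = (if 0 \<le> t then f t else 0)"
    using Linf_pos_bounded_extension[OF \<open>f \<in> Linf_pos\<close>] by blast
  have f: "f \<in> borel_measurable borel"
    using \<open>f \<in> Linf_pos\<close> by (simp add: Linf_pos_def)
  have summ_iff: "summ \<psi> f L \<longleftrightarrow> ext0 \<psi> \<in> conv_limit_set g L"
    if "set_integrable lborel {0..} \<psi>" "(LINT t:{0..}|lborel. \<psi> t) = 1" for \<psi>
    using integrable_ext0[OF that(1)] summ_iff_tendsto_conv[OF f g(1) _ g(3)]
    by (simp add: conv_limit_set_def integral_ext0 that(2))
  have "ext0 \<phi>' \<in> conv_limit_set g L"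
    using summ_iff[OF assms(2,4)] summ' by simp
  then have "closed_ideal_gen (ext0 \<phi>') \<subseteq> conv_limit_set g L"
    using is_closed_ideal_conv_limit_set[OF g(1,2)] by (auto simp: closed_ideal_gen_def)
  moreover have "ext0 \<phi> \<in> closed_ideal_gen (ext0 \<phi>)"
    by (simp add: closed_ideal_gen_def)
  ultimately show "summ \<phi> f L"
    using summ_iff[OF assms(1,3)] assms(5) by blast
qed

end
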